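(* Let $P$ be a control flow automaton, let $\pi$ be a looping trace of $P$, and let $\hat{\pi}$ be an under-approximating accelerator for $\pi$ with bound function $\beta$ (satisfying the monotonicity property stated in the context). Then $\hat{\pi}\cdot\hat{\pi}\preceq\hat{\pi}$, i.e. $[\![\hat{\pi}\cdot\hat{\pi}]\!]\subseteq[\![\hat{\pi}]\!]$.
   Context: Programs are over a finite set $\mathsf{Vars}$ of program variables; a state $\sigma$ is a total function assigning a value to each variable, and $\mathsf{States}$ is the set of states. Statements are assignments $x:=e$ (set $x$ to the value of expression $e$, other variables unchanged), nondeterministic assignments $x:=*$ (set $x$ to an arbitrary value), assumptions $[B]$ for a predicate $B$ (the identity relation restricted to states satisfying $B$), and $\mathsf{skip}$ (identity). Each statement $s$ denotes a transition relation $[\![s]\!]\subseteq\mathsf{States}\times\mathsf{States}$. A trace is a finite sequence of statements; its relation is the relational composition $[\![s_1\cdot s_2\cdots s_n]\!]=[\![s_1]\!]\circ\cdots\circ[\![s_n]\!]$ (first $s_1$, then $s_2$, etc.), the empty trace denoting the identity; $[\![\pi]\!]^0$ is the identity and $[\![\pi]\!]^n=[\![\pi]\!]\circ[\![\pi]\!]^{n-1}$. A control flow automaton (CFA) $P=\langle V,E,v_0\rangle$ has finitely many vertices $V$, edges $E\subseteq V\times\mathsf{Stmts}_P\times V$ labelled by statements from a finite set $\mathsf{Stmts}_P$, and initial vertex $v_0$. A trace $s_i\cdots s_n$ of $P$ is the label sequence of a path $v_{i-1}\xrightarrow{s_i}v_i\cdots\xrightarrow{s_n}v_n$; it is looping if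 the path starts and ends at the same vertex (its head). An under-approximating accelerator for a looping trace $\pi$ is a finite sequence of statements $\hat{\pi}$ (not necessarily over $\mathsf{Stmts}_P$) together with a function $\beta:\mathsf{States}\to\mathbb{N}_0$ such that $\langle\sigma,\sigma'\rangle\in[\![\hat{\pi}]\!]$ iff there is $i\in\mathbb{N}_0$ with $i\le\beta(\sigma)$ and $\langle\sigma,\sigma'\rangle\in[\![\pi]\!]^i$, and such that for all $i,\sigma,\sigma'$: if $i\le\beta(\sigma)$ and $\langle\sigma,\sigma'\rangle\in[\![\pi]\!]^i$ then $\beta(\sigma')\le\beta(\sigma)-i$. A trace $\pi_2$ is subsumed by $\pi_1$, written $\pi_2\preceq\pi_1$, if $[\![\pi_2]\!]\subseteq[\![\pi_1]\!]$. *)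

theory Defs
  imports Main
begin

type_synonym ('v, 'd) state = "'v \<Rightarrow> 'd"

datatype ('v, 'd) stmt =
    Assign 'v "('v, 'd) state \<Rightarrow> 'd"
  | Havoc 'v
  | Assume "('v, 'd) state \<Rightarrow> bool"
  | Skip

fun sem :: "('v, 'd) stmt \<Rightarrow> (('v, 'd) state \<times> ('v, 'd) state) set" where
  "sem (Assign x e) = {(\<sigma>, \<sigma>'). \<sigma>' = \<sigma>(x := e \<sigma>)}"
| "sem (Havoc x) = {(\<sigma>, \<sigma>'). \<exists>c. \<sigma>' = \<sigma>(x := c)}"
| "sem (Assume B) = {(\<sigma>, \<sigma>'). B \<sigma> \<and> \<sigma>' = \<sigma>}"
| "sem Skip = Id"

fun trace_sem :: "('v, 'd) stmt list \<Rightarrow> (('v, 'd) state \<times> ('v, 'd) state) set" where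
  "trace_sem [] = Id"
| "trace_sem (s # ss) = sem s O trace_sem ss"

text \<open>Control flow automaton (V, E, v0); its statement set is the (finite) set of edge labels.\<close>
type_synonym ('n, 'v, 'd) cfa = "'n set \<times> ('n \<times> ('v, 'd) stmt \<times> 'n) set \<times> 'n"

definition is_cfa :: "('n, 'v, 'd) cfa \<Rightarrow> bool" where
  "is_cfa P = (case P of (V, E, v0) \<Rightarrow>
     finite V \<and> finite E \<and> v0 \<in> V \<and> (\<forall>(u, s, w) \<in> E. u \<in> V \<and> w \<in> V))"

fun is_path :: "('n \<times> ('v, 'd) stmt \<times> 'n) set \<Rightarrow> 'n \<Rightarrow> ('v, 'd) stmt list \<Rightarrow> 'n \<Rightarrow> bool" where
  "is_path E u [] w = (u = w)"
| "is_path E u (s # ss) w = (\<exists>u'. (u, s, u') \<in> E \<and> is_path E u' ss w)"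

definition looping_trace :: "('n, 'v, 'd) cfa \<Rightarrow> ('v, 'd) stmt list \<Rightarrow> bool" where
  "looping_trace P \<pi> = (case P of (V, E, v0) \<Rightarrow> \<exists>v \<in> V. is_path E v \<pi> v)"

definition under_approx_accel ::
  "('v, 'd) stmt list \<Rightarrow> ('v, 'd) stmt list \<Rightarrow> (('v, 'd) state \<Rightarrow> nat) \<Rightarrow> bool" where
  "under_approx_accel \<pi> \<pi>hat \<beta> =
     ((\<forall>\<sigma> \<sigma>'. (\<sigma>, \<sigma>') \<in> trace_sem \<pi>hat \<longleftrightarrow>
                (\<exists>i. i \<le> \<beta> \<sigma> \<and> (\<sigma>, \<sigma>') \<in> trace_sem \<pi> ^^ i)) \<and>
      (\<forall>i \<sigma> \<sigma>'. i \<le> \<beta> \<sigma> \<and> (\<sigma>, \<sigma>') \<in> trace_sem \<pi> ^^ i \<longrightarrow> \<beta> \<sigma>' \<le> \<beta> \<sigma> - i))"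

definition subsumed :: "('v, 'd) stmt list \<Rightarrow> ('v, 'd) stmt list \<Rightarrow> bool" where
  "subsumed \<pi>2 \<pi>1 = (trace_sem \<pi>2 \<subseteq> trace_sem \<pi>1)"

end

theory Submission
  imports Defs
begin

text \<open>Only the accelerator hypothesis matters: two accelerated runs compose to a single run of
  \<open>i + j\<close> iterations, and the monotonicity of \<open>\<beta>\<close> keeps \<open>i + j\<close> within the budget \<open>\<beta>\<close> of the start
  state.\<close>

lemma trace_sem_append: "trace_sem (xs @ ys) = trace_sem xs O trace_sem ys"
  by (induction xs) auto

lemma relpow_add_relcompI:
  "(x, y) \<in> R ^^ i \<Longrightarrow> (y, z) \<in> R ^^ j \<Longrightarrow> (x, z) \<in> R ^^ (i + j)"
  by (metis add.commute relcomp.relcompI relpow_add)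

lemma bounded_relpow_relcomp_subset:
  fixes R A :: "('a \<times> 'a) set" and \<beta> :: "'a \<Rightarrow> nat"
  assumes A_iff: "\<And>x y. (x, y) \<in> A \<longleftrightarrow> (\<exists>i \<le> \<beta> x. (x, y) \<in> R ^^ i)"
    and \<beta>_decreases: "\<And>i x y. i \<le> \<beta> x \<Longrightarrow> (x, y) \<in> R ^^ i \<Longrightarrow> \<beta> y \<le> \<beta> x - i"
  shows "A O A \<subseteq> A"
proof clarify
  fix x y z
  assume "(x, y) \<in> A" "(y, z) \<in> A"
  then obtain i j where i: "i \<le> \<beta> x" "(x, y) \<in> R ^^ i"
    and j: "j \<le> \<beta> y" "(y, z) \<in> R ^^ j"
    using A_iff by blast
  have "i + j \<le> \<beta> x"
    using i j \<beta>_decreases[OF i] by linarith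
  moreover have "(x, z) \<in> R ^^ (i + j)"
    using i j by (blast intro: relpow_add_relcompI)
  ultimately show "(x, z) \<in> A"
    using A_iff by blast
qed

theorem lemma1:
  fixes P :: "('n, 'v :: finite, 'd) cfa"
    and \<pi> \<pi>hat :: "('v, 'd) stmt list"
    and \<beta> :: "('v, 'd) state \<Rightarrow> nat"
  assumes "is_cfa P"
    and "looping_trace P \<pi>"
    and "under_approx_accel \<pi> \<pi>hat \<beta>"
  shows "subsumed (\<pi>hat @ \<pi>hat) \<pi>hat"
proof -
  have "trace_sem \<pi>hat O trace_sem \<pi>hat \<subseteq> trace_sem \<pi>hat"
    by (rule bounded_relpow_relcomp_subset[where R = "trace_sem \<pi>" and \<beta> = \<beta>])
      (use assms(3) in \<open>auto simp: under_approx_accel_def\<close>)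
  then show ?thesis
    by (simp add: subsumed_def trace_sem_append)
qed

end
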